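(* Let $G$ be a cubic graph of order $2n$ and oddness $2$. Then $\chi'_{[n-1]}(G)=4$.
   Context: All graphs are finite, simple (no loops, no parallel edges), connected and cubic. The oddness of a cubic graph $G$ having a $2$-factor is the minimum, over all $2$-factors $F$ of $G$, of the number of odd-length circuits of $F$. For a positive integer $k$, a $[k]$-matching of $G$ is a matching of $G$ with exactly $k$ edges. The excessive $[k]$-index $\chi'_{[k]}(G)$ is the minimum number of $[k]$-matchings of $G$ whose union is $E(G)$; if some edge of $G$ lies in no $[k]$-matching, one sets $\chi'_{[k]}(G)=\infty$. *)

theory Defs
  imports "HOL-Library.Extended_Nat"
begin

definition simple_graph :: "'a set \<Rightarrow> 'a set set \<Rightarrow> bool" where
  "simple_graph V E \<longleftrightarrow> finite V \<and>
     (\<forall>e\<in>E. \<exists>u v. e = {u, v} \<and> u \<noteq> v \<and> u \<in> V \<and> v \<in> V)"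

definition adj :: "'a set set \<Rightarrow> ('a \<times> 'a) set" where
  "adj E = {(u, v). {u, v} \<in> E}"

definition connected_graph :: "'a set \<Rightarrow> 'a set set \<Rightarrow> bool" where
  "connected_graph V E \<longleftrightarrow> (\<forall>u\<in>V. \<forall>v\<in>V. (u, v) \<in> (adj E)\<^sup>*)"

definition degree :: "'a set set \<Rightarrow> 'a \<Rightarrow> nat" where
  "degree E v = card {e\<in>E. v \<in> e}"

definition cubic_graph :: "'a set \<Rightarrow> 'a set set \<Rightarrow> bool" where
  "cubic_graph V E \<longleftrightarrow> simple_graph V E \<and> connected_graph V E \<and>
     (\<forall>v\<in>V. degree E v = 3)"

definition two_factor :: "'a set \<Rightarrow> 'a set set \<Rightarrow> 'a set set \<Rightarrow> bool" where
  "two_factor V E F \<longleftrightarrow> F \<subseteq> E \<and> (\<forall>v\<in>V. degree F v = 2)"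

text \<open>The circuits of a 2-factor F are the connected components of (V, F),
  given by their vertex sets.\<close>
definition components :: "'a set \<Rightarrow> 'a set set \<Rightarrow> 'a set set" where
  "components V F = (\<lambda>v. {u\<in>V. (v, u) \<in> (adj F)\<^sup>*}) ` V"

definition odd_circuits :: "'a set \<Rightarrow> 'a set set \<Rightarrow> nat" where
  "odd_circuits V F = card {C \<in> components V F. odd (card C)}"

definition has_two_factor :: "'a set \<Rightarrow> 'a set set \<Rightarrow> bool" where
  "has_two_factor V E \<longleftrightarrow> (\<exists>F. two_factor V E F)"

definition oddness :: "'a set \<Rightarrow> 'a set set \<Rightarrow> nat" where
  "oddness V E = Min {odd_circuits V F | F. two_factor V E F}"

definition k_matching :: "'a set set \<Rightarrow> nat \<Rightarrow> 'a set set \<Rightarrow> bool" where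
  "k_matching E k M \<longleftrightarrow> M \<subseteq> E \<and> card M = k \<and>
     (\<forall>e\<in>M. \<forall>f\<in>M. e \<noteq> f \<longrightarrow> e \<inter> f = {})"

definition excessive_index :: "'a set set \<Rightarrow> nat \<Rightarrow> enat" where
  "excessive_index E k =
     (if \<forall>e\<in>E. \<exists>M. k_matching E k M \<and> e \<in> M
      then enat (LEAST m. \<exists>\<M>. finite \<M> \<and> card \<M> = m \<and>
                  (\<forall>M\<in>\<M>. k_matching E k M) \<and> \<Union>\<M> = E)
      else \<infinity>)"

end

theory Submission
  imports Defs
begin

text \<open>Take a 2-factor $F$ with exactly two odd circuits $C_1, C_2$; the other edges form a perfect
  matching $M$ with $n$ edges. Deleting an edge $e_i$ of $C_i$ from $F$ leaves even circuits and two
  paths, a 2-edge-colourable graph with $2n - 2$ edges. Every matching inside $F$ misses a vertex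
  of each odd circuit, so both colour classes have exactly $n - 1$ edges. Two more
  $[n-1]$-matchings cover $M \<union> \<lbrace>e_1, e_2\<rbrace>$: if no edge of $M$ meets both $e_1$ and $e_2$,
  take each $e_i$ with the edges of $M$ avoiding it; otherwise take $e_1, e_2$ with $n - 3$ edges
  of $M$ avoiding both, and $M$ minus one of these, which needs $n \<ge> 4$ (for $n = 3$ the graph
  would be the prism, of oddness 0). Three $[n-1]$-matchings cover at most $3n - 3 < |E|$ edges.\<close>

definition component :: "'a set set \<Rightarrow> 'a \<Rightarrow> 'a set" where
  "component H v = {u. (v, u) \<in> (adj H)\<^sup>*}"

definition doubletons :: "'a set set \<Rightarrow> bool" where
  "doubletons H \<longleftrightarrow> (\<forall>e\<in>H. \<exists>u v. e = {u, v} \<and> u \<noteq> v)"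

text \<open>If all degrees are at most 2, the components all of whose vertices have degree 2 are
  exactly the circuits.\<close>
definition even_cycles :: "'a set set \<Rightarrow> bool" where
  "even_cycles H \<longleftrightarrow>
     (\<forall>w. (\<forall>y\<in>component H w. degree H y = 2) \<longrightarrow> even (card (component H w)))"

lemma card_doubleton: "doubletons H \<Longrightarrow> e \<in> H \<Longrightarrow> card e = 2"
  and finite_doubleton: "doubletons H \<Longrightarrow> e \<in> H \<Longrightarrow> finite e"
  unfolding doubletons_def by auto

lemma doubletons_subset: "doubletons H \<Longrightarrow> P \<subseteq> H \<Longrightarrow> doubletons P"
  unfolding doubletons_def by blast

lemma doubletonsE:
  assumes "doubletons H" "f \<in> H" "u \<in> f"
  obtains v where "f = {u, v}" "u \<noteq> v"
  using assms unfolding doubletons_def by (metis doubleton_eq_iff insertE singletonD)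

lemma sym_adj: "sym (adj H)"
  unfolding adj_def sym_def by (auto simp: insert_commute)

lemma component_self: "v \<in> component H v"
  by (simp add: component_def)

lemma component_edge: "y \<in> component H v \<Longrightarrow> {y, z} \<in> H \<Longrightarrow> z \<in> component H v"
  unfolding component_def by (auto simp: adj_def intro: rtrancl_into_rtrancl)

lemma component_eq: "y \<in> component H v \<Longrightarrow> component H y = component H v"
proof -
  assume "y \<in> component H v"
  then have "(v, y) \<in> (adj H)\<^sup>*" by (simp add: component_def)
  moreover note symD[OF sym_rtrancl[OF sym_adj] this]
  ultimately show ?thesis unfolding component_def by (meson rtrancl_trans)
qed

lemma component_disjoint:
  "component H v \<noteq> component H w \<Longrightarrow> component H v \<inter> component H w = {}"
  by (metis component_eq disjoint_iff)

lemma edge_subset_component: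
  assumes "doubletons H" "f \<in> H" "x \<in> f" "x \<in> component H v"
  shows "f \<subseteq> component H v"
proof
  fix z assume "z \<in> f"
  obtain y where "f = {x, y}" using doubletonsE[OF assms(1-3)] by blast
  then have "z = x \<or> f = {x, z}" using \<open>z \<in> f\<close> by auto
  then show "z \<in> component H v" using assms(2,4) component_edge[OF assms(4)] by auto
qed

lemma component_subset: "component H v \<subseteq> insert v (\<Union>H)"
proof
  fix u assume "u \<in> component H v"
  then have "(v, u) \<in> (adj H)\<^sup>*" by (simp add: component_def)
  then show "u \<in> insert v (\<Union>H)" by (cases rule: rtranclE) (auto simp: adj_def)
qed

lemma finite_component: "finite H \<Longrightarrow> doubletons H \<Longrightarrow> finite (component H v)"
  by (rule finite_subset[OF component_subset]) (auto simp: doubletons_def)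

lemma component_Diff:
  assumes "H' \<subseteq> H" and "\<forall>f\<in>H - H'. f \<inter> component H' w = {} \<or> f \<subseteq> component H' w"
  shows "component H w = component H' w"
proof
  have "(adj H')\<^sup>* \<subseteq> (adj H)\<^sup>*"
    using assms(1) unfolding adj_def by (intro rtrancl_mono) blast
  then show "component H' w \<subseteq> component H w" unfolding component_def by blast
next
  show "component H w \<subseteq> component H' w"
  proof
    fix x assume "x \<in> component H w"
    then have "(w, x) \<in> (adj H)\<^sup>*" by (simp add: component_def)
    then show "x \<in> component H' w"
    proof (induction rule: rtrancl_induct)
      case base
      show ?case by (rule component_self)
    next
      case (step y z)
      from step.hyps(2) have "{y, z} \<in> H" by (simp add: adj_def)
      show ?case
      proof (cases "{y, z} \<in> H'")
        case True
        then show ?thesis by (rule component_edge[OF step.IH])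
      next
        case False
        with \<open>{y, z} \<in> H\<close> have "{y, z} \<in> H - H'" by simp
        from bspec[OF assms(2) this] show ?thesis using step.IH by blast
      qed
    qed
  qed
qed

lemma degree_eq_0_iff: "finite H \<Longrightarrow> degree H y = 0 \<longleftrightarrow> (\<forall>f\<in>H. y \<notin> f)"
  unfolding degree_def by (simp add: card_eq_0_iff Ball_def)

lemma degree_1_edge_unique:
  "degree H y = 1 \<Longrightarrow> f \<in> H \<Longrightarrow> g \<in> H \<Longrightarrow> y \<in> f \<Longrightarrow> y \<in> g \<Longrightarrow> f = g"
  unfolding degree_def by (metis (mono_tags, lifting) card_1_singletonE mem_Collect_eq singletonD)

lemma degree_2_neighboursE:
  assumes "doubletons H" "degree H v = 2"
  obtains a b where "{v, a} \<in> H" "{v, b} \<in> H" "v \<noteq> a" "v \<noteq> b" "a \<noteq> b"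
proof -
  obtain f g where fg: "f \<in> H" "g \<in> H" "v \<in> f" "v \<in> g" "f \<noteq> g"
    using assms(2) unfolding degree_def card_2_iff by blast
  obtain a b where "f = {v, a}" "v \<noteq> a" "g = {v, b}" "v \<noteq> b"
    using doubletonsE[OF assms(1)] fg by metis
  then show thesis using that fg by blast
qed

lemma degree_mono: "finite H \<Longrightarrow> H' \<subseteq> H \<Longrightarrow> degree H' y \<le> degree H y"
  unfolding degree_def by (rule card_mono) auto

lemma degree_Diff_less:
  "finite H \<Longrightarrow> e \<in> H \<Longrightarrow> e \<in> X \<Longrightarrow> y \<in> e \<Longrightarrow> degree (H - X) y < degree H y"
  unfolding degree_def by (rule psubset_card_mono) auto

lemma degree_Diff_notin: "\<forall>e\<in>X. y \<notin> e \<Longrightarrow> degree (H - X) y = degree H y"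
  unfolding degree_def by (rule arg_cong[where f = card]) auto

lemma degree_Diff_edge:
  assumes "finite H" "e \<in> H" "y \<in> e"
  shows "degree (H - {e}) y = degree H y - 1"
proof -
  have "{f \<in> H - {e}. y \<in> f} = {f \<in> H. y \<in> f} - {e}" by auto
  then show ?thesis unfolding degree_def using assms by (simp add: card_Diff_singleton)
qed

lemma degree_eq_2I:
  assumes "finite H" "f \<in> H" "y \<in> f" "degree H y \<le> 2" "degree H y \<noteq> 1"
  shows "degree H y = 2"
proof -
  have "degree H y \<noteq> 0" using degree_eq_0_iff[OF assms(1), of y] assms(2,3) by blast
  then show ?thesis using assms(4,5) by linarith
qed

lemma sum_degree:
  assumes "finite V" "\<forall>e\<in>X. e \<subseteq> V" "doubletons X"
  shows "(\<Sum>v\<in>V. degree X v) = 2 * card X"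
proof -
  have finX: "finite X" using assms(1,2) by (meson Pow_iff finite_Pow_iff finite_subset subsetI)
  have "(\<Sum>v\<in>V. degree X v) = (\<Sum>v\<in>V. \<Sum>e\<in>X. if v \<in> e then 1 else 0)"
    unfolding degree_def by (rule sum.cong) (simp_all add: sum.inter_filter[OF finX, symmetric])
  also have "\<dots> = (\<Sum>e\<in>X. \<Sum>v\<in>V. if v \<in> e then 1 else 0)" by (rule sum.swap)
  also have "\<dots> = (\<Sum>e\<in>X. card {v\<in>V. v \<in> e})"
    by (rule sum.cong) (simp_all add: sum.inter_filter[OF assms(1), symmetric])
  also have "\<dots> = (\<Sum>e\<in>X. 2)"
  proof (rule sum.cong)
    fix e assume "e \<in> X"
    then have "{v\<in>V. v \<in> e} = e" "card e = 2" using assms(2,3) unfolding doubletons_def by auto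
    then show "card {v\<in>V. v \<in> e} = 2" by simp
  qed simp
  finally show ?thesis by simp
qed

lemma triangle_component_edge:
  assumes "doubletons F" and "\<forall>x\<in>component F c. degree F x = 2" and "card (component F c) = 3"
    and "v \<in> component F c" "w \<in> component F c" "v \<noteq> w"
  shows "{v, w} \<in> F"
proof -
  obtain a b where ab: "{v, a} \<in> F" "{v, b} \<in> F" "v \<noteq> a" "v \<noteq> b" "a \<noteq> b"
    using degree_2_neighboursE[OF assms(1)] assms(2,4) by metis
  then have "a \<in> component F c" "b \<in> component F c"
    using component_edge[OF assms(4)] by auto
  then have "{v, a, b} = component F c"
    using assms(3,4) ab card_ge_0_finite[of "component F c"] by (intro card_subset_eq) auto
  then show ?thesis using assms(5,6) ab by auto
qed

lemma hexagon:
  assumes "distinct [a, b, c, d, e, f]"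
  defines "F \<equiv> {{a, b}, {b, c}, {c, d}, {d, e}, {e, f}, {f, a}}"
  shows "\<forall>v\<in>{a, b, c, d, e, f}. degree F v = 2"
    and "components {a, b, c, d, e, f} F = {{a, b, c, d, e, f}}"
proof -
  let ?V = "{a, b, c, d, e, f}"
  have filter_insert: "{g \<in> insert x A. P g} = (if P x then insert x {g\<in>A. P g} else {g\<in>A. P g})"
    for x A P by auto
  have "a \<noteq> b" "a \<noteq> c" "a \<noteq> d" "a \<noteq> e" "a \<noteq> f" "b \<noteq> c" "b \<noteq> d" "b \<noteq> e"
    "b \<noteq> f" "c \<noteq> d" "c \<noteq> e" "c \<noteq> f" "d \<noteq> e" "d \<noteq> f" "e \<noteq> f"
    using assms(1) by auto
  note distinct = this this[symmetric]
  show "\<forall>v\<in>?V. degree F v = 2"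
    unfolding degree_def F_def filter_insert by (simp add: distinct doubleton_eq_iff)
  have "(a, b) \<in> adj F" "(b, c) \<in> adj F" "(c, d) \<in> adj F" "(d, e) \<in> adj F" "(e, f) \<in> adj F"
    unfolding adj_def F_def by simp_all
  then have "?V \<subseteq> component F a"
    unfolding component_def by (auto intro: rtrancl_into_rtrancl)
  moreover have "component F a \<subseteq> ?V"
    using component_subset[of F a] unfolding F_def by auto
  ultimately have "component F v = ?V" if "v \<in> ?V" for v
    using component_eq[of v F a] that by auto
  moreover have "{u\<in>?V. (v, u) \<in> (adj F)\<^sup>*} = component F v" if "v \<in> ?V" for v
    using calculation[OF that] unfolding component_def by auto
  ultimately show "components ?V F = {?V}"
    unfolding components_def by auto
qed

section \<open>Matchings and 2-edge-colourings\<close>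

definition matching :: "'a set set \<Rightarrow> bool" where
  "matching P \<longleftrightarrow> (\<forall>e\<in>P. \<forall>f\<in>P. e \<noteq> f \<longrightarrow> e \<inter> f = {})"

definition edge_2_colouring :: "'a set set \<Rightarrow> 'a set set \<Rightarrow> 'a set set \<Rightarrow> bool" where
  "edge_2_colouring H P1 P2 \<longleftrightarrow> P1 \<union> P2 = H \<and> P1 \<inter> P2 = {} \<and> matching P1 \<and> matching P2"

lemma matching_subset: "matching P \<Longrightarrow> Q \<subseteq> P \<Longrightarrow> matching Q"
  unfolding matching_def by blast

lemma matching_insert: "matching P \<Longrightarrow> \<forall>f\<in>P. e \<inter> f = {} \<Longrightarrow> matching (insert e P)"
  unfolding matching_def by (auto simp: Int_commute)

lemma k_matching_iff: "k_matching E k M \<longleftrightarrow> M \<subseteq> E \<and> card M = k \<and> matching M"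
  by (auto simp: k_matching_def matching_def)

lemma k_matching_insert:
  assumes "k_matching E k M" "finite E" "e \<in> E" "e \<notin> M" "\<forall>f\<in>M. e \<inter> f = {}"
  shows "k_matching E (Suc k) (insert e M)"
  using assms finite_subset[of M E] matching_insert[of M e] by (auto simp: k_matching_iff)

lemma excessive_index_eqI:
  assumes "finite \<M>" "card \<M> \<le> m" "\<forall>M\<in>\<M>. k_matching E k M" "\<Union>\<M> = E"
    and "(m - 1) * k < card E"
  shows "excessive_index E k = enat m"
proof -
  have lower: "m \<le> card \<N>" if "\<forall>M\<in>\<N>. k_matching E k M" "\<Union>\<N> = E" for \<N>
  proof -
    have "card E \<le> (\<Sum>M\<in>\<N>. card M)" using card_Union_le_sum_card that(2) by metis
    also have "\<dots> = card \<N> * k" using that(1) by (simp add: k_matching_def)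
    finally have "(m - 1) * k < card \<N> * k" using assms(5) by linarith
    then show ?thesis using mult_less_cancel2 by fastforce
  qed
  have "(LEAST m'. \<exists>\<N>. finite \<N> \<and> card \<N> = m' \<and> (\<forall>M\<in>\<N>. k_matching E k M) \<and> \<Union>\<N> = E) = m"
  proof (rule Least_equality)
    show "\<exists>\<N>. finite \<N> \<and> card \<N> = m \<and> (\<forall>M\<in>\<N>. k_matching E k M) \<and> \<Union>\<N> = E"
      using assms(1-4) lower[OF assms(3,4)] by (intro exI[of _ \<M>]) simp
  qed (use lower in blast)
  moreover have "\<forall>e\<in>E. \<exists>M. k_matching E k M \<and> e \<in> M" using assms(3,4) by blast
  ultimately show ?thesis unfolding excessive_index_def by simp
qed

lemma degree_matching: "matching P \<Longrightarrow> degree P y = of_bool (y \<in> \<Union>P)"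
proof (cases "y \<in> \<Union>P")
  case True
  then obtain f where "f \<in> P" "y \<in> f" by blast
  moreover assume "matching P"
  ultimately have "{g \<in> P. y \<in> g} = {f}" unfolding matching_def by blast
  then show ?thesis using True by (simp add: degree_def)
next
  case False
  then have "{g \<in> P. y \<in> g} = {}" by blast
  then have "degree P y = 0" unfolding degree_def by (metis card.empty)
  with False show ?thesis by simp
qed

lemma card_Union_matching:
  assumes "matching P" "doubletons P" "finite P"
  shows "card (\<Union>P) = 2 * card P"
proof -
  have "card (\<Union>P) = sum card P"
    using assms by (intro card_Union_disjoint)
      (auto simp: pairwise_def disjnt_def matching_def doubletons_def)
  also have "\<dots> = sum (\<lambda>_. 2) P"
    using assms(2) by (intro sum.cong) (auto simp: doubletons_def)
  finally show ?thesis by simp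
qed

lemma even_card_Int_Union_matching:
  assumes "matching P" "doubletons P" "finite P"
    and "\<forall>f\<in>P. f \<inter> K \<noteq> {} \<longrightarrow> f \<subseteq> K"
  shows "even (card (K \<inter> \<Union>P))"
proof -
  let ?Q = "{f\<in>P. f \<subseteq> K}"
  have "K \<inter> \<Union>P = \<Union>?Q" using assms(4) by blast
  moreover have "card (\<Union>?Q) = 2 * card ?Q"
    using assms(1-3) by (intro card_Union_matching) (auto simp: matching_def doubletons_def)
  ultimately show ?thesis by simp
qed

lemma matching_misses_odd_set:
  assumes "matching P" "doubletons P" "finite P"
    and "\<forall>f\<in>P. f \<inter> K \<noteq> {} \<longrightarrow> f \<subseteq> K" and "odd (card K)"
  obtains z where "z \<in> K" "z \<notin> \<Union>P"
  using even_card_Int_Union_matching[OF assms(1-4)] assms(5)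
  by (metis Int_absorb2 subsetI)

lemma edge_2_colouring_sym: "edge_2_colouring H P1 P2 \<Longrightarrow> edge_2_colouring H P2 P1"
  unfolding edge_2_colouring_def by blast

lemma degree_edge_2_colouring:
  assumes "edge_2_colouring H P1 P2" "finite H"
  shows "degree H y = of_bool (y \<in> \<Union>P1) + of_bool (y \<in> \<Union>P2)"
proof -
  have "{f\<in>H. y \<in> f} = {f\<in>P1. y \<in> f} \<union> {f\<in>P2. y \<in> f}"
    and "{f\<in>P1. y \<in> f} \<inter> {f\<in>P2. y \<in> f} = {}"
    using assms(1) unfolding edge_2_colouring_def by blast+
  moreover have "finite {f\<in>P1. y \<in> f}" "finite {f\<in>P2. y \<in> f}"
    using assms unfolding edge_2_colouring_def by auto
  ultimately have "degree H y = degree P1 y + degree P2 y"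
    unfolding degree_def by (simp add: card_Un_disjoint)
  then show ?thesis
    using assms(1) degree_matching unfolding edge_2_colouring_def by metis
qed

lemma degree_edge_2_colouring_eq:
  assumes "edge_2_colouring H P1 P2" "finite H"
  shows "degree H y = 2 \<longleftrightarrow> y \<in> \<Union>P1 \<and> y \<in> \<Union>P2"
    and "degree H y = 1 \<longleftrightarrow> (y \<in> \<Union>P1 \<longleftrightarrow> y \<notin> \<Union>P2)"
  using degree_edge_2_colouring[OF assms, of y]
  by (cases "y \<in> \<Union>P1"; cases "y \<in> \<Union>P2"; simp)+

lemma edge_2_colouring_extend:
  assumes "edge_2_colouring (H - {e}) P1 P2" "e \<in> H" "e \<inter> \<Union>P1 = {} \<or> e \<inter> \<Union>P2 = {}"
  shows "\<exists>Q1 Q2. edge_2_colouring H Q1 Q2"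
proof (cases "e \<inter> \<Union>P2 = {}")
  case True
  then have "edge_2_colouring H P1 (insert e P2)"
    using assms(1,2) matching_insert[of P2 e] unfolding edge_2_colouring_def by blast
  then show ?thesis by blast
next
  case False
  then have "edge_2_colouring H (insert e P1) P2"
    using assms matching_insert[of P1 e] unfolding edge_2_colouring_def by blast
  then show ?thesis by blast
qed

lemma even_cycles_Diff_edge:
  assumes "finite H" "\<forall>y. degree H y \<le> 2" "even_cycles H" "e \<in> H"
  shows "even_cycles (H - {e})"
  unfolding even_cycles_def
proof (intro allI impI)
  fix w
  let ?K = "component (H - {e}) w"
  assume deg2: "\<forall>y\<in>?K. degree (H - {e}) y = 2"
  have "degree (H - {e}) y < 2" if "y \<in> e" for y
    using degree_Diff_less[OF assms(1,4) _ that, of "{e}"] assms(2) by (meson insertI1 order.strict_trans2)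
  then have "e \<inter> ?K = {}" using deg2 by fastforce
  then have "component H w = ?K"
    by (intro component_Diff) auto
  moreover have "\<forall>y\<in>component H w. degree H y = 2"
  proof
    fix y assume "y \<in> component H w"
    then have "y \<in> ?K" "y \<notin> e" using calculation \<open>e \<inter> ?K = {}\<close> by auto
    then show "degree H y = 2" using deg2 degree_Diff_notin[of "{e}" y H] by simp
  qed
  ultimately show "even (card ?K)"
    using assms(3) unfolding even_cycles_def by metis
qed

text \<open>If $u$ had colour $a$ and $v$ colour $b$, the component $K$ of $u$ after removing
  $\<lbrace>u, v\<rbrace>$ would meet class $b$ in $K - \<lbrace>u\<rbrace>$, an even set; but $|K|$ is even too: it is
  the intersection with class $a$ if $v \<notin> K$, and an even circuit of $H$ otherwise.\<close>
lemma cycle_edge_ends_same_class: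
  assumes fin: "finite H" and dbl: "doubletons H" and deg: "\<forall>y. degree H y \<le> 2"
    and even: "even_cycles H" and no_pendant: "\<forall>y. degree H y \<noteq> 1"
    and e: "{u, v} \<in> H" "u \<noteq> v"
    and col: "edge_2_colouring (H - {{u, v}}) Pa Pb" and u: "u \<in> \<Union>Pa"
  shows "v \<in> \<Union>Pa"
proof (rule ccontr)
  assume v: "v \<notin> \<Union>Pa"
  let ?H' = "H - {{u, v}}"
  let ?K = "component ?H' u"
  have finH': "finite ?H'" and dblH': "doubletons ?H'"
    using fin doubletons_subset[OF dbl] by auto
  have H'_sub: "Pa \<subseteq> ?H'" "Pb \<subseteq> ?H'" and match: "matching Pa" "matching Pb"
    using col by (auto simp: edge_2_colouring_def)
  have deg_K: "degree H y = 2" if "y \<in> ?K" for y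
  proof -
    have "\<exists>f\<in>H. y \<in> f" using that component_subset[of ?H' u] e(1) by blast
    then show ?thesis using degree_eq_2I[OF fin] deg no_pendant by metis
  qed
  have "degree ?H' u = 1" "degree ?H' v = 1"
    using deg_K[OF component_self] degree_eq_2I[OF fin e(1)] deg no_pendant degree_Diff_edge[OF fin e(1)]
    by auto
  then have ends: "u \<notin> \<Union>Pb" "v \<in> \<Union>Pb"
    using degree_edge_2_colouring_eq(2)[OF col finH'] u v by blast+
  have inner: "y \<in> \<Union>Pa \<and> y \<in> \<Union>Pb" if "y \<in> ?K" "y \<notin> {u, v}" for y
    using deg_K[OF that(1)] degree_Diff_notin[of "{{u, v}}" y H] that(2)
      degree_edge_2_colouring_eq(1)[OF col finH'] by simp
  have even_class: "even (card (?K \<inter> \<Union>P))" if "P \<subseteq> ?H'" "matching P" for P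
  proof (rule even_card_Int_Union_matching[OF that(2)])
    show "doubletons P" using doubletons_subset[OF dblH' that(1)] .
    show "finite P" using finite_subset[OF that(1) finH'] .
    show "\<forall>f\<in>P. f \<inter> ?K \<noteq> {} \<longrightarrow> f \<subseteq> ?K"
      using that(1) edge_subset_component[OF dblH'] by (meson disjoint_iff subsetD)
  qed
  have "?K \<inter> \<Union>Pb = ?K - {u}"
    using inner ends by auto
  moreover have "finite ?K" "u \<in> ?K"
    using finite_component[OF finH' dblH'] component_self by auto
  ultimately have odd_K: "odd (card ?K)"
    using even_class[OF H'_sub(2) match(2)] card_gt_0_iff[of ?K]
    by (simp add: card_Diff_singleton) blast
  show False
  proof (cases "v \<in> ?K")
    case False
    then have "?K \<inter> \<Union>Pa = ?K" using inner u by auto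
    then show False using even_class[OF H'_sub(1) match(1)] odd_K by simp
  next
    case True
    then have "component H u = ?K"
      using component_self[of u] by (intro component_Diff) auto
    then show False using even odd_K deg_K unfolding even_cycles_def by metis
  qed
qed

lemma edge_2_colouring_extend_pendant:
  assumes fin: "finite H" and deg: "\<forall>y. degree H y \<le> 2" and e: "{u, v} \<in> H"
    and u: "degree H u = 1" and col: "edge_2_colouring (H - {{u, v}}) P1 P2"
  shows "\<exists>Q1 Q2. edge_2_colouring H Q1 Q2"
proof -
  have finH': "finite (H - {{u, v}})" using fin by simp
  have "degree (H - {{u, v}}) u = 0" using degree_Diff_edge[OF fin e] u by simp
  then have "u \<notin> \<Union>P1" "u \<notin> \<Union>P2" using degree_edge_2_colouring[OF col finH', of u] by simp_all
  moreover have "degree (H - {{u, v}}) v \<le> 1"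
    using degree_Diff_edge[OF fin e, of v] deg[rule_format, of v] by simp
  then have "\<not> (v \<in> \<Union>P1 \<and> v \<in> \<Union>P2)"
    using degree_edge_2_colouring_eq(1)[OF col finH', of v] by auto
  ultimately show ?thesis by (intro edge_2_colouring_extend[OF col e]) blast
qed

lemma edge_2_colouring_extend_cycle_edge:
  assumes fin: "finite H" and dbl: "doubletons H" and deg: "\<forall>y. degree H y \<le> 2"
    and even: "even_cycles H" and no_pendant: "\<forall>y. degree H y \<noteq> 1"
    and e: "{u, v} \<in> H" "u \<noteq> v" and col: "edge_2_colouring (H - {{u, v}}) P1 P2"
  shows "\<exists>Q1 Q2. edge_2_colouring H Q1 Q2"
proof -
  have finH': "finite (H - {{u, v}})" using fin by simp
  have "degree (H - {{u, v}}) y = 1" if "y \<in> {u, v}" for y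
    using degree_eq_2I[OF fin e(1) that] deg no_pendant degree_Diff_edge[OF fin e(1) that] by simp
  then have "u \<in> \<Union>P1 \<longleftrightarrow> u \<notin> \<Union>P2" "v \<in> \<Union>P1 \<longleftrightarrow> v \<notin> \<Union>P2"
    using degree_edge_2_colouring_eq(2)[OF col finH'] by blast+
  moreover have "u \<in> \<Union>P1 \<Longrightarrow> v \<in> \<Union>P1" "u \<in> \<Union>P2 \<Longrightarrow> v \<in> \<Union>P2"
    using cycle_edge_ends_same_class[OF fin dbl deg even no_pendant e col]
      cycle_edge_ends_same_class[OF fin dbl deg even no_pendant e edge_2_colouring_sym[OF col]]
    by blast+
  ultimately show ?thesis by (intro edge_2_colouring_extend[OF col e(1)]) blast
qed

text \<open>Induction on the edge set: remove a pendant edge if there is one, otherwise any edge,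
  which then lies on a circuit.\<close>
lemma edge_2_colouring_exists:
  assumes "finite H" "doubletons H" "\<forall>y. degree H y \<le> 2" "even_cycles H"
  shows "\<exists>P1 P2. edge_2_colouring H P1 P2"
  using assms
proof (induction H rule: finite_psubset_induct)
  case (psubset H)
  note fin = psubset.hyps and dbl = psubset.prems(1) and deg = psubset.prems(2)
    and even = psubset.prems(3)
  show ?case
  proof (cases "H = {}")
    case True
    then show ?thesis by (auto simp: edge_2_colouring_def matching_def)
  next
    case False
    obtain u v where e: "{u, v} \<in> H" "u \<noteq> v"
      and choice: "degree H u = 1 \<or> (\<forall>y. degree H y \<noteq> 1)"
    proof (cases "\<exists>u. degree H u = 1")
      case True
      then obtain u where u: "degree H u = 1" by blast
      then obtain f where "f \<in> H" "u \<in> f" using degree_eq_0_iff[OF fin, of u] by auto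
      then show thesis using doubletonsE[OF dbl] that u by metis
    next
      case False
      obtain f where "f \<in> H" using \<open>H \<noteq> {}\<close> by blast
      then obtain u v where "f = {u, v}" "u \<noteq> v" using dbl by (auto simp: doubletons_def)
      then show thesis using that \<open>f \<in> H\<close> False by blast
    qed
    let ?H' = "H - {{u, v}}"
    have "\<forall>y. degree ?H' y \<le> 2"
      using deg degree_mono[OF fin, of ?H'] by (meson Diff_subset order_trans)
    moreover have "even_cycles ?H'" using even_cycles_Diff_edge[OF fin deg even e(1)] .
    moreover have "doubletons ?H'" using doubletons_subset[OF dbl] by blast
    ultimately obtain P1 P2 where col: "edge_2_colouring ?H' P1 P2"
      using psubset.IH[of ?H'] e(1) by blast
    from choice show ?thesis
      using edge_2_colouring_extend_pendant[OF fin deg e(1) _ col]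
        edge_2_colouring_extend_cycle_edge[OF fin dbl deg even _ e col] by blast
  qed
qed

lemma cubic_graph_edges:
  assumes "cubic_graph V E"
  shows "finite V" and "\<forall>e\<in>E. e \<subseteq> V" and "doubletons E" and "finite E"
proof -
  have sg: "finite V" "\<forall>e\<in>E. \<exists>u v. e = {u, v} \<and> u \<noteq> v \<and> u \<in> V \<and> v \<in> V"
    using assms by (auto simp: cubic_graph_def simple_graph_def)
  show "finite V" using sg(1) .
  show sub: "\<forall>e\<in>E. e \<subseteq> V" using sg(2) by fastforce
  show "doubletons E" using sg(2) unfolding doubletons_def by fast
  have "E \<subseteq> Pow V" using sub by blast
  then show "finite E" using sg(1) by (meson finite_Pow_iff finite_subset)
qed

lemma finite_two_factors: "finite E \<Longrightarrow> finite {F. two_factor V E F}"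
  by (rule finite_subset[of _ "Pow E"]) (auto simp: two_factor_def)

lemma oddness_le: "finite E \<Longrightarrow> two_factor V E F \<Longrightarrow> oddness V E \<le> odd_circuits V F"
  unfolding oddness_def using finite_two_factors[of E V]
  by (intro Min_le) (auto simp: setcompr_eq_image)

lemma oddness_attained:
  assumes "finite E" "has_two_factor V E"
  obtains F where "two_factor V E F" "odd_circuits V F = oddness V E"
proof -
  have "oddness V E \<in> odd_circuits V ` {F. two_factor V E F}"
    unfolding oddness_def setcompr_eq_image using finite_two_factors[OF assms(1)] assms(2)
    by (intro Min_in) (auto simp: has_two_factor_def)
  then show thesis using that by auto
qed

section \<open>Cubic graphs with a 2-factor\<close>

locale cubic_2_factor =
  fixes V :: "'a set" and E F :: "'a set set"
  assumes cubic: "cubic_graph V E" and two_factor: "two_factor V E F"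
begin

abbreviation M :: "'a set set" where "M \<equiv> E - F"

lemma finite_V: "finite V"
  and E_edge_subset: "e \<in> E \<Longrightarrow> e \<subseteq> V"
  and doubletons_E: "doubletons E"
  and finite_E: "finite E"
  using cubic_graph_edges[OF cubic] by auto

lemma F_subset: "F \<subseteq> E" and degree_F: "v \<in> V \<Longrightarrow> degree F v = 2"
  using two_factor by (auto simp: two_factor_def)

lemma finite_F: "finite F" and doubletons_F: "doubletons F" and F_edge_subset: "e \<in> F \<Longrightarrow> e \<subseteq> V"
  using F_subset finite_E doubletons_subset[OF doubletons_E] E_edge_subset
  by (auto intro: finite_subset)

lemma finite_M: "finite M" and doubletons_M: "doubletons M"
  using finite_E doubletons_subset[OF doubletons_E] by auto

lemma degree_F_le_2: "degree F y \<le> 2"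
proof (cases "y \<in> V")
  case False
  then have "\<forall>e\<in>F. y \<notin> e" using F_edge_subset by blast
  then show ?thesis using degree_eq_0_iff[OF finite_F, of y] by simp
qed (simp add: degree_F)

lemma degree_M: "v \<in> V \<Longrightarrow> degree M v = 1"
proof -
  assume v: "v \<in> V"
  have "{e\<in>E. v \<in> e} = {e\<in>F. v \<in> e} \<union> {e\<in>M. v \<in> e}"
    and "{e\<in>F. v \<in> e} \<inter> {e\<in>M. v \<in> e} = {}"
    using F_subset by blast+
  then have "degree E v = degree F v + degree M v"
    unfolding degree_def using finite_F finite_M by (simp add: card_Un_disjoint)
  then show ?thesis using v degree_F cubic by (simp add: cubic_graph_def)
qed

lemma matching_M: "matching M"
  unfolding matching_def
proof (intro ballI impI)
  fix f g assume fg: "f \<in> M" "g \<in> M" "f \<noteq> g"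
  show "f \<inter> g = {}"
  proof (rule ccontr)
    assume "f \<inter> g \<noteq> {}"
    then obtain z where z: "z \<in> f" "z \<in> g" by blast
    then have "z \<in> V" using fg(1) E_edge_subset by blast
    then show False using degree_1_edge_unique[OF degree_M] fg z by blast
  qed
qed

lemma Union_M: "\<Union>M = V"
proof
  show "\<Union>M \<subseteq> V" using E_edge_subset by blast
  show "V \<subseteq> \<Union>M"
  proof
    fix v assume "v \<in> V"
    then have "degree M v \<noteq> 0" using degree_M by simp
    then show "v \<in> \<Union>M" using degree_eq_0_iff[OF finite_M, of v] by auto
  qed
qed

lemma card_M: "2 * card M = card V"
  using card_Union_matching[OF matching_M doubletons_M finite_M] Union_M by simp

lemma card_F: "card F = card V"
proof -
  have "(\<Sum>v\<in>V. degree F v) = 2 * card V" using degree_F by simp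
  then show ?thesis using sum_degree[OF finite_V _ doubletons_F] F_edge_subset by simp
qed

lemma card_E: "2 * card E = 3 * card V"
proof -
  have "(\<Sum>v\<in>V. degree E v) = 3 * card V" using cubic by (simp add: cubic_graph_def)
  then show ?thesis using sum_degree[OF finite_V _ doubletons_E] E_edge_subset by simp
qed

lemma component_F_subset: "v \<in> V \<Longrightarrow> component F v \<subseteq> V"
  using component_subset[of F v] F_edge_subset by blast

lemma finite_component_F: "finite (component F v)"
  using finite_component[OF finite_F doubletons_F] .

lemma components_F: "components V F = component F ` V"
  unfolding components_def
  using component_F_subset by (intro image_cong) (auto simp: component_def)

lemma card_component_F_ge_3: "v \<in> V \<Longrightarrow> 3 \<le> card (component F v)"
proof -
  assume "v \<in> V"
  then obtain a b where ab: "{v, a} \<in> F" "{v, b} \<in> F" "v \<noteq> a" "v \<noteq> b" "a \<noteq> b"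
    using degree_2_neighboursE[OF doubletons_F degree_F] by metis
  then have "{v, a, b} \<subseteq> component F v"
    using component_self[of v F] component_edge[OF component_self] by auto
  then have "card {v, a, b} \<le> card (component F v)"
    by (intro card_mono finite_component_F)
  then show ?thesis using ab by simp
qed

text \<open>If $F$ consists of two triangles, then $M$ joins them like a prism, and a prism has a
  Hamiltonian circuit: two edges of each triangle and two edges of $M$.\<close>
lemma two_triangles_hamiltonian:
  assumes "c1 \<in> V" "c2 \<in> V" "card (component F c1) = 3" "card (component F c2) = 3"
    and "component F c1 \<inter> component F c2 = {}" "component F c1 \<union> component F c2 = V"
  shows "\<exists>F'. two_factor V E F' \<and> odd_circuits V F' = 0"
proof -
  let ?C1 = "component F c1" and ?C2 = "component F c2"
  have deg2: "\<forall>x\<in>component F c. degree F x = 2" if "c \<in> V" for c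
    using component_F_subset[OF that] degree_F by blast
  note tri1 = triangle_component_edge[OF doubletons_F deg2[OF assms(1)] assms(3)]
  note tri2 = triangle_component_edge[OF doubletons_F deg2[OF assms(2)] assms(4)]
  have partner: "\<exists>p\<in>?C2. {v, p} \<in> M" if v: "v \<in> ?C1" for v
  proof -
    have "v \<in> V" using v assms(6) by blast
    then obtain f where f: "f \<in> M" "v \<in> f" using Union_M by blast
    then obtain p where p: "f = {v, p}" "v \<noteq> p" using doubletonsE[OF doubletons_M] by metis
    have "p \<in> V" using f p E_edge_subset by blast
    moreover have "p \<notin> ?C1" using tri1[OF v _ p(2)] f p by blast
    ultimately show ?thesis using assms(6) f p by blast
  qed
  obtain x y z where xyz: "?C1 = {x, y, z}" "x \<noteq> y" "y \<noteq> z" "x \<noteq> z"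
    using assms(3) unfolding card_3_iff by blast
  then obtain px py pz where p: "px \<in> ?C2" "py \<in> ?C2" "pz \<in> ?C2"
    and m: "{x, px} \<in> M" "{y, py} \<in> M" "{z, pz} \<in> M"
    using partner by (metis insertI1 insertI2)
  have partners_distinct: "p \<noteq> q" if "{u, p} \<in> M" "{w, q} \<in> M" "u \<noteq> w" for u w p q
  proof
    assume "p = q"
    with that(3) have "{u, p} \<noteq> {w, q}" by (auto simp: doubleton_eq_iff)
    then have "{u, p} \<inter> {w, q} = {}" using matching_M that(1,2) unfolding matching_def by meson
    with \<open>p = q\<close> show False by blast
  qed
  have "px \<noteq> py" "py \<noteq> pz" "px \<noteq> pz"
    using partners_distinct m xyz by blast+
  moreover have "{x, y, z} \<inter> {px, py, pz} = {}"
    using xyz(1) p assms(5) by blast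
  ultimately have dist: "distinct [x, y, z, pz, py, px]"
    using xyz by auto
  have C2: "?C2 = {px, py, pz}"
    using p \<open>px \<noteq> py\<close> \<open>py \<noteq> pz\<close> \<open>px \<noteq> pz\<close> assms(4)
    by (intro card_subset_eq[symmetric] finite_component_F) auto
  define F' where "F' = {{x, y}, {y, z}, {z, pz}, {pz, py}, {py, px}, {px, x}}"
  have V: "V = {x, y, z, pz, py, px}" using assms(6) xyz(1) C2 by auto
  have "F' \<subseteq> E"
    using tri1[of x y] tri1[of y z] tri2[of pz py] tri2[of py px] m F_subset xyz p dist
    unfolding F'_def by (auto simp: insert_commute)
  then have "two_factor V E F'"
    using hexagon(1)[OF dist] unfolding two_factor_def V F'_def by simp
  moreover have "odd_circuits V F' = 0"
    using hexagon(2)[OF dist] dist unfolding odd_circuits_def V F'_def by simp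
  ultimately show ?thesis by blast
qed

end

lemma card_edges_avoiding_non_edge:
  assumes "doubletons M" "finite M" "degree M x = 1" "degree M y = 1" "x \<noteq> y" "{x, y} \<notin> M"
  shows "card {f\<in>M. f \<inter> {x, y} = {}} + 2 = card M"
proof -
  have meet: "{f\<in>M. f \<inter> {x, y} \<noteq> {}} = {f\<in>M. x \<in> f} \<union> {f\<in>M. y \<in> f}" by blast
  have "{f\<in>M. x \<in> f} \<inter> {f\<in>M. y \<in> f} = {}"
  proof (rule ccontr)
    assume "{f\<in>M. x \<in> f} \<inter> {f\<in>M. y \<in> f} \<noteq> {}"
    then obtain f where f: "f \<in> M" "x \<in> f" "y \<in> f" by blast
    then have "f = {x, y}" using doubletonsE[OF assms(1)] assms(5) by (metis insertE singletonD)
    then show False using f(1) assms(6) by simp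
  qed
  then have "card {f\<in>M. f \<inter> {x, y} \<noteq> {}} = 2"
    unfolding meet using assms(2-4) by (simp add: card_Un_disjoint degree_def)
  moreover have "card M = card {f\<in>M. f \<inter> {x, y} = {}} + card {f\<in>M. f \<inter> {x, y} \<noteq> {}}"
    using assms(2) by (subst card_Un_disjoint[symmetric]) (auto intro: arg_cong[where f = card])
  ultimately show ?thesis by simp
qed

lemma card_edges_meeting_le:
  assumes "finite S" "\<forall>x\<in>S. degree M x \<le> 1"
  shows "card {f\<in>M. f \<inter> S \<noteq> {}} \<le> card S"
proof -
  have "{f\<in>M. f \<inter> S \<noteq> {}} = (\<Union>x\<in>S. {f\<in>M. x \<in> f})" by blast
  then have "card {f\<in>M. f \<inter> S \<noteq> {}} \<le> (\<Sum>x\<in>S. degree M x)"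
    unfolding degree_def using card_UN_le[OF assms(1)] by metis
  also have "\<dots> \<le> (\<Sum>x\<in>S. 1)" using assms(2) by (intro sum_mono) auto
  finally show ?thesis by simp
qed

context cubic_2_factor
begin

lemma k_matching_F_edge_avoiding_M:
  assumes "e \<in> F" "card V = 2 * n"
  shows "k_matching E (n - 1) (insert e {g\<in>M. g \<inter> e = {}})"
proof -
  obtain a b where e: "e = {a, b}" "a \<noteq> b" using assms(1) doubletons_F unfolding doubletons_def by blast
  then have "a \<in> V" "b \<in> V" using F_edge_subset[OF assms(1)] by auto
  then have "Suc (card {g\<in>M. g \<inter> e = {}}) = n - 1"
    using card_edges_avoiding_non_edge[OF doubletons_M finite_M degree_M degree_M e(2)]
      card_M assms e by simp
  moreover have "k_matching E (card {g\<in>M. g \<inter> e = {}}) {g\<in>M. g \<inter> e = {}}"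
    using matching_subset[OF matching_M, of "{g\<in>M. g \<inter> e = {}}"] by (auto simp: k_matching_iff)
  then have "k_matching E (Suc (card {g\<in>M. g \<inter> e = {}})) (insert e {g\<in>M. g \<inter> e = {}})"
    by (rule k_matching_insert[OF _ finite_E]) (use assms(1) F_subset in \<open>auto simp: Int_commute\<close>)
  ultimately show ?thesis by simp
qed

lemma k_matchings_cover_separated:
  assumes "e1 \<in> F" "e2 \<in> F" "card V = 2 * n" "\<forall>g\<in>M. g \<inter> e1 = {} \<or> g \<inter> e2 = {}"
  shows "\<exists>A B. k_matching E (n - 1) A \<and> k_matching E (n - 1) B \<and> M \<union> {e1, e2} \<subseteq> A \<union> B"
  using k_matching_F_edge_avoiding_M[OF assms(1,3)] k_matching_F_edge_avoiding_M[OF assms(2,3)] assms(4)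
  by blast

text \<open>At most three edges of $M$ meet $e_1 \<union> e_2$, because $g$ meets both.\<close>
lemma k_matchings_cover_joined:
  assumes e: "e1 \<in> F" "e2 \<in> F" "e1 \<inter> e2 = {}" and n: "card V = 2 * n" "4 \<le> n"
    and g: "g \<in> M" "a \<in> g" "a \<in> e1" "b \<in> g" "b \<in> e2"
  shows "\<exists>A B. k_matching E (n - 1) A \<and> k_matching E (n - 1) B \<and> M \<union> {e1, e2} \<subseteq> A \<union> B"
proof -
  let ?S = "(e1 \<union> e2) - {b}"
  let ?K = "{f\<in>M. f \<inter> (e1 \<union> e2) = {}}"
  have "{f\<in>M. f \<inter> (e1 \<union> e2) \<noteq> {}} = {f\<in>M. f \<inter> ?S \<noteq> {}}"
  proof (intro subset_antisym subsetI)
    fix f assume f: "f \<in> {f\<in>M. f \<inter> (e1 \<union> e2) \<noteq> {}}"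
    show "f \<in> {f\<in>M. f \<inter> ?S \<noteq> {}}"
    proof (cases "b \<in> f")
      case True
      have "b \<in> V" using g(5) F_edge_subset[OF e(2)] by blast
      then have "f = g" using degree_1_edge_unique[OF degree_M] f g(1,4) True by blast
      then show ?thesis using f g e(3) by auto
    qed (use f in auto)
  qed auto
  moreover have "card ?S = 3"
  proof -
    have "card (e1 \<union> e2) = 4"
      using e card_doubleton[OF doubletons_F] finite_doubleton[OF doubletons_F]
      by (simp add: card_Un_disjoint)
    then show ?thesis using g(5) finite_doubleton[OF doubletons_F] e by simp
  qed
  moreover have "\<forall>x\<in>?S. degree M x \<le> 1" using degree_M F_edge_subset e by fastforce
  ultimately have "card {f\<in>M. f \<inter> (e1 \<union> e2) \<noteq> {}} \<le> 3"
    using card_edges_meeting_le[of ?S M] finite_doubleton[OF doubletons_F] e by simp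
  moreover have "card M = card ?K + card {f\<in>M. f \<inter> (e1 \<union> e2) \<noteq> {}}"
    using finite_E by (subst card_Un_disjoint[symmetric]) (auto intro: arg_cong[where f = card])
  ultimately have "n - 3 \<le> card ?K" using card_M n by linarith
  then obtain T where T: "T \<subseteq> ?K" "card T = n - 3" "finite T"
    by (rule obtain_subset_with_card_n)
  then obtain m where m: "m \<in> T" using n(2) by fastforce
  have "k_matching E (n - 3) T"
    using T matching_subset[OF matching_M, of T] by (auto simp: k_matching_iff)
  then have "k_matching E (Suc (n - 3)) (insert e2 T)"
    by (rule k_matching_insert[OF _ finite_E]) (use T e F_subset in \<open>auto simp: Int_commute\<close>)
  then have "k_matching E (Suc (Suc (n - 3))) (insert e1 (insert e2 T))"
    by (rule k_matching_insert[OF _ finite_E])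
      (use T e F_subset doubletons_F in \<open>auto simp: Int_commute doubletons_def\<close>)
  moreover have "Suc (Suc (n - 3)) = n - 1" using n(2) by simp
  moreover have "k_matching E (n - 1) (M - {m})"
    using m T finite_M card_M n matching_subset[OF matching_M, of "M - {m}"] by (auto simp: k_matching_iff)
  moreover have "M \<union> {e1, e2} \<subseteq> insert e1 (insert e2 T) \<union> (M - {m})" using m by blast
  ultimately show ?thesis by metis
qed

end

section \<open>Cubic graphs of oddness two\<close>

locale two_odd_circuits = cubic_2_factor +
  fixes c1 c2 :: 'a
  assumes c1: "c1 \<in> V" and c2: "c2 \<in> V"
    and distinct_components: "component F c1 \<noteq> component F c2"
    and odd_component: "odd (card (component F c1))" "odd (card (component F c2))"
    and only_odd_components:
      "w \<in> V \<Longrightarrow> odd (card (component F w)) \<Longrightarrow> component F w \<in> {component F c1, component F c2}"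

lemma (in cubic_2_factor) two_odd_circuitsE:
  assumes "odd_circuits V F = 2"
  obtains c1 c2 where "two_odd_circuits V E F c1 c2"
proof -
  obtain C1 C2 where C: "{C \<in> components V F. odd (card C)} = {C1, C2}" "C1 \<noteq> C2"
    using assms unfolding odd_circuits_def card_2_iff by blast
  then have "C1 \<in> component F ` V" "C2 \<in> component F ` V" unfolding components_F by blast+
  then obtain c1 c2 where "c1 \<in> V" "C1 = component F c1" "c2 \<in> V" "C2 = component F c2"
    by blast
  then have "two_odd_circuits V E F c1 c2"
    using C cubic_2_factor_axioms unfolding two_odd_circuits_def two_odd_circuits_axioms_def components_F
    by blast
  then show thesis by (rule that)
qed

context two_odd_circuits
begin

lemma disjoint_components: "component F c1 \<inter> component F c2 = {}"
  using component_disjoint[OF distinct_components] .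

lemma card_V_ge_6: "6 \<le> card V"
proof -
  have "card (component F c1 \<union> component F c2) \<le> card V"
    using component_F_subset c1 c2 by (intro card_mono finite_V) auto
  then show ?thesis
    using card_component_F_ge_3[OF c1] card_component_F_ge_3[OF c2] disjoint_components
    by (simp add: card_Un_disjoint finite_component_F)
qed

lemma edges_at_c1_c2_disjoint:
  assumes "e1 \<in> F" "c1 \<in> e1" "e2 \<in> F" "c2 \<in> e2"
  shows "e1 \<inter> e2 = {}"
proof -
  have "e1 \<subseteq> component F c1" "e2 \<subseteq> component F c2"
    using edge_subset_component[OF doubletons_F _ _ component_self] assms by metis+
  then show ?thesis using disjoint_components by blast
qed

lemma card_matching_in_F: "matching P \<Longrightarrow> P \<subseteq> F \<Longrightarrow> 2 * card P + 2 \<le> card V"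
proof -
  assume P: "matching P" "P \<subseteq> F"
  have dbl: "doubletons P" and fin: "finite P"
    using P(2) doubletons_subset[OF doubletons_F] finite_subset[OF _ finite_F] by auto
  have closed: "\<forall>f\<in>P. f \<inter> component F c \<noteq> {} \<longrightarrow> f \<subseteq> component F c" for c
    using P(2) edge_subset_component[OF doubletons_F] by (meson disjoint_iff subsetD)
  obtain z1 z2 where z: "z1 \<in> component F c1" "z1 \<notin> \<Union>P" "z2 \<in> component F c2" "z2 \<notin> \<Union>P"
    using matching_misses_odd_set[OF P(1) dbl fin closed odd_component(1)]
      matching_misses_odd_set[OF P(1) dbl fin closed odd_component(2)] by metis
  then have "z1 \<noteq> z2" "z1 \<in> V" "z2 \<in> V"
    using disjoint_components component_F_subset c1 c2 by blast+
  moreover have "\<Union>P \<subseteq> V - {z1, z2}" using z P(2) F_edge_subset by blast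
  then have "card (\<Union>P) \<le> card (V - {z1, z2})" by (intro card_mono) (simp add: finite_V)
  ultimately show ?thesis using card_Union_matching[OF P(1) dbl fin] card_V_ge_6 by simp
qed

lemma colouring_of_cut_factor:
  assumes e: "e1 \<in> F" "c1 \<in> e1" "e2 \<in> F" "c2 \<in> e2"
  obtains P1 P2 where "edge_2_colouring (F - {e1, e2}) P1 P2"
    and "2 * card P1 + 2 = card V" "2 * card P2 + 2 = card V"
proof -
  let ?H = "F - {e1, e2}"
  have "e1 \<noteq> e2" using edges_at_c1_c2_disjoint[OF e] e(2) by blast
  have finH: "finite ?H" using finite_F by simp
  have degH: "\<forall>y. degree ?H y \<le> 2" using degree_mono[OF finite_F] degree_F_le_2 by (meson Diff_subset order_trans)
  have cut_end: "degree ?H y < 2" if "y \<in> e1 \<union> e2" for y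
    using that degree_Diff_less[OF finite_F, of _ "{e1, e2}" y] e degree_F_le_2[of y]
    by (metis UnE insertCI order_less_le_trans)
  have "even_cycles ?H"
    unfolding even_cycles_def
  proof (intro allI impI)
    fix w
    let ?K = "component ?H w"
    assume deg2: "\<forall>y\<in>?K. degree ?H y = 2"
    then have avoid: "(e1 \<union> e2) \<inter> ?K = {}" using cut_end by fastforce
    have "component F w = ?K"
      using avoid by (intro component_Diff) auto
    moreover have "w \<in> V"
      using deg2 component_self[of w] degree_eq_0_iff[OF finH, of w] F_edge_subset by fastforce
    moreover have "c1 \<notin> ?K" "c2 \<notin> ?K" using avoid e by blast+
    ultimately show "even (card ?K)"
      using only_odd_components component_self[of c1 F] component_self[of c2 F] by fastforce
  qed
  then obtain P1 P2 where col: "edge_2_colouring ?H P1 P2"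
    using edge_2_colouring_exists[OF finH doubletons_subset[OF doubletons_F] degH] by blast
  then have "P1 \<subseteq> F" "P2 \<subseteq> F" "matching P1" "matching P2"
    by (auto simp: edge_2_colouring_def)
  then have "2 * card P1 + 2 \<le> card V" "2 * card P2 + 2 \<le> card V"
    using card_matching_in_F by auto
  moreover have "card P1 + card P2 = card ?H"
  proof -
    have "P1 \<union> P2 = ?H" "P1 \<inter> P2 = {}" using col by (auto simp: edge_2_colouring_def)
    moreover have "finite P1" "finite P2" using finH calculation(1) by (metis finite_Un)+
    ultimately show ?thesis by (metis card_Un_disjoint)
  qed
  moreover have "card ?H + 2 = card V"
    using card_F e \<open>e1 \<noteq> e2\<close> finite_F card_V_ge_6 by (simp add: card_Diff_subset)
  ultimately show thesis using that col by simp
qed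

lemma card_V_ge_8:
  assumes "oddness V E = 2"
  shows "8 \<le> card V"
proof (rule ccontr)
  assume "\<not> 8 \<le> card V"
  then have "card V = 6" using card_V_ge_6 card_M by presburger
  moreover have sub: "component F c1 \<union> component F c2 \<subseteq> V"
    using component_F_subset c1 c2 by auto
  moreover have "card (component F c1 \<union> component F c2) = card (component F c1) + card (component F c2)"
    using disjoint_components by (simp add: card_Un_disjoint finite_component_F)
  moreover note card_mono[OF finite_V sub] card_component_F_ge_3[OF c1] card_component_F_ge_3[OF c2]
  ultimately have "card (component F c1) = 3" "card (component F c2) = 3"
    and card_Un: "card (component F c1 \<union> component F c2) = card V"
    by linarith+
  moreover have "component F c1 \<union> component F c2 = V"
    using card_subset_eq[OF finite_V sub card_Un] .
  ultimately obtain F' where "two_factor V E F'" "odd_circuits V F' = 0"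
    using two_triangles_hamiltonian[OF c1 c2 _ _ disjoint_components] by blast
  then show False using oddness_le[OF finite_E] assms by fastforce
qed

lemma four_matchings_cover:
  assumes "card V = 2 * n" "4 \<le> n"
  obtains P1 P2 A B where "k_matching E (n - 1) P1" "k_matching E (n - 1) P2"
    "k_matching E (n - 1) A" "k_matching E (n - 1) B" "P1 \<union> P2 \<union> A \<union> B = E"
proof -
  have "\<exists>e\<in>F. c \<in> e" if "c \<in> V" for c
    using degree_F[OF that] degree_eq_0_iff[OF finite_F, of c] by auto
  then obtain e1 e2 where e: "e1 \<in> F" "c1 \<in> e1" "e2 \<in> F" "c2 \<in> e2" using c1 c2 by blast
  then have "e1 \<inter> e2 = {}" by (rule edges_at_c1_c2_disjoint)
  obtain P1 P2 where col: "edge_2_colouring (F - {e1, e2}) P1 P2"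
    and card: "2 * card P1 + 2 = card V" "2 * card P2 + 2 = card V"
    using colouring_of_cut_factor[OF e] by metis
  have P: "k_matching E (n - 1) P1" "k_matching E (n - 1) P2"
    using col card assms(1) F_subset by (auto simp: edge_2_colouring_def k_matching_iff)
  obtain A B where AB: "k_matching E (n - 1) A" "k_matching E (n - 1) B" "M \<union> {e1, e2} \<subseteq> A \<union> B"
  proof (cases "\<exists>g\<in>M. g \<inter> e1 \<noteq> {} \<and> g \<inter> e2 \<noteq> {}")
    case True
    then obtain g a b where "g \<in> M" "a \<in> g" "a \<in> e1" "b \<in> g" "b \<in> e2" by blast
    then show thesis
      using k_matchings_cover_joined[OF e(1,3) \<open>e1 \<inter> e2 = {}\<close> assms] that by blast
  next
    case False
    then have "\<forall>g\<in>M. g \<inter> e1 = {} \<or> g \<inter> e2 = {}" by blast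
    then show thesis using k_matchings_cover_separated[OF e(1,3) assms(1)] that by metis
  qed
  have "P1 \<union> P2 \<union> M \<union> {e1, e2} = E"
    using col e F_subset by (auto simp: edge_2_colouring_def)
  then have "P1 \<union> P2 \<union> A \<union> B = E"
    using P AB by (auto simp: k_matching_iff)
  then show thesis using that P AB by blast
qed

end

theorem proposition6:
  fixes V :: "'a set" and E :: "'a set set" and n :: nat
  assumes "cubic_graph V E"
    and "card V = 2 * n"
    and "has_two_factor V E"
    and "oddness V E = 2"
  shows "excessive_index E (n - 1) = 4"
proof -
  obtain F where F: "two_factor V E F" "odd_circuits V F = 2"
    using oddness_attained[OF cubic_graph_edges(4)[OF assms(1)] assms(3)] assms(4) by metis
  interpret cubic_2_factor V E F using assms(1) F(1) by unfold_locales
  obtain c1 c2 where "two_odd_circuits V E F c1 c2" using two_odd_circuitsE[OF F(2)] .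
  then interpret two_odd_circuits V E F c1 c2 .
  have "4 \<le> n" using card_V_ge_8[OF assms(4)] assms(2) by simp
  then obtain P1 P2 A B where "k_matching E (n - 1) P1" "k_matching E (n - 1) P2"
    "k_matching E (n - 1) A" "k_matching E (n - 1) B" "P1 \<union> P2 \<union> A \<union> B = E"
    using four_matchings_cover[OF assms(2)] by metis
  moreover have "card {P1, P2, A, B} \<le> 4" by (simp add: card_insert_le_m1)
  moreover have "3 * (n - 1) < card E" using card_E assms(2) \<open>4 \<le> n\<close> by simp
  ultimately have "excessive_index E (n - 1) = enat 4"
    by (intro excessive_index_eqI[of "{P1, P2, A, B}"]) auto
  then show ?thesis by (simp add: numeral_eq_enat)
qed

end
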